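(* Let $n\ge2$, $\alpha\in(1,2]$, $K\ge2$, and let $\mathcal{M}=\mathcal{M}(\alpha,K)$ be the collection of seeded intervals defined below. Then for every real $h$ with $0<h\le n/2$ and every integer $\eta$ with $\max(3h/2,1)\le\eta\le n-\max(3h/2,1)$, there exist integers $l\ge1$ and $v$ such that (i) $(v-l,v+l]\in\mathcal{M}$; (ii) $h/2\le l\le\max(h,1)$; (iii) $|v-\eta|\le l/K\le l/2$. In particular, $(v-l,v+l]\subseteq(\eta-\max(3h/2,1),\ \eta+\max(3h/2,1)]$.
   Context: Seeded intervals $\mathcal{M}(\alpha,K)$ for sample size $n$: let $l_1=1$, $l_{j+1}=\max\{l_j+1,\lfloor\alpha l_j\rfloor\}$ for $j\ge1$, $H=\max\{j:l_j\le n/2\}$, $s_l=\max\{1,\lfloor l/K\rfloor\}$, $\mathcal{I}_l=\{(n-2l,n]\}\cup\{(is_l,\,is_l+2l]: i=0,1,\dots,\lfloor(n-2l)/s_l\rfloor\}$, and $\mathcal{M}(\alpha,K)=\bigcup_{j=1}^{H}\mathcal{I}_{l_j}$, where $(a,b]$ denotes the integer interval $\{a+1,\dots,b\}$. *)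

theory Defs
  imports Complex_Main
begin

text \<open>Lengths: lseq alpha j is l_(j+1) of the paper (0-based index).\<close>
fun lseq :: "real \<Rightarrow> nat \<Rightarrow> int" where
  "lseq \<alpha> 0 = 1"
| "lseq \<alpha> (Suc j) = max (lseq \<alpha> j + 1) \<lfloor>\<alpha> * real_of_int (lseq \<alpha> j)\<rfloor>"

definition Hidx :: "nat \<Rightarrow> real \<Rightarrow> nat" where
  "Hidx n \<alpha> = Max {j. real_of_int (lseq \<alpha> j) \<le> real n / 2}"

definition shift :: "real \<Rightarrow> int \<Rightarrow> int" where
  "shift K l = max 1 \<lfloor>real_of_int l / K\<rfloor>"

definition layer :: "nat \<Rightarrow> real \<Rightarrow> int \<Rightarrow> int set set" where
  "layer n K l = {{int n - 2*l<..int n}} \<union>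
     {{i * shift K l<..i * shift K l + 2*l} | i.
        0 \<le> i \<and> i \<le> \<lfloor>real_of_int (int n - 2*l) / real_of_int (shift K l)\<rfloor>}"

definition seeded :: "nat \<Rightarrow> real \<Rightarrow> real \<Rightarrow> int set set" where
  "seeded n \<alpha> K = (\<Union>j\<in>{0..Hidx n \<alpha>}. layer n K (lseq \<alpha> j))"

end

theory Submission
  imports Defs
begin

text \<open>Take for l the largest length l_j not exceeding max h 1; since lengths at most double
  from one level to the next (as \<alpha> \<le> 2), l > max h 1 / 2. In layer l the left endpoints run
  through the multiples of the shift s = max 1 \<lfloor>l/K\<rfloor>, so some centre v lies in [\<eta> - s + 1, \<eta>],
  and s - 1 \<le> l/K.\<close>

lemma lseq_pos: "1 \<le> lseq \<alpha> j"
  by (induction j) auto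

lemma lseq_ge_Suc_index: "int j + 1 \<le> lseq \<alpha> j"
  by (induction j) auto

lemma lseq_Suc_le_double:
  assumes "\<alpha> \<le> 2"
  shows "lseq \<alpha> (Suc j) \<le> 2 * lseq \<alpha> j"
proof -
  have "\<alpha> * real_of_int (lseq \<alpha> j) \<le> 2 * real_of_int (lseq \<alpha> j)"
    using assms lseq_pos[of \<alpha> j] by (intro mult_right_mono) auto
  then have "\<lfloor>\<alpha> * real_of_int (lseq \<alpha> j)\<rfloor> \<le> 2 * lseq \<alpha> j"
    by (simp add: floor_le_iff)
  then show ?thesis
    using lseq_pos[of \<alpha> j] by simp
qed

lemma finite_lseq_le: "finite {j. real_of_int (lseq \<alpha> j) \<le> c}"
proof (rule finite_subset)
  show "{j. real_of_int (lseq \<alpha> j) \<le> c} \<subseteq> {..nat \<lceil>c\<rceil>}"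
  proof
    fix j assume "j \<in> {j. real_of_int (lseq \<alpha> j) \<le> c}"
    then have "real j \<le> c"
      using lseq_ge_Suc_index[of j \<alpha>] by simp
    then show "j \<in> {..nat \<lceil>c\<rceil>}"
      by (simp add: le_nat_iff) linarith
  qed
qed simp

lemma lseq_bracket:
  assumes "1 \<le> c"
  obtains j where "real_of_int (lseq \<alpha> j) \<le> c" and "c < real_of_int (lseq \<alpha> (Suc j))"
proof -
  define J where "J = {j. real_of_int (lseq \<alpha> j) \<le> c}"
  have "finite J" "0 \<in> J"
    using finite_lseq_le assms by (auto simp: J_def)
  then have "Max J \<in> J" and "Suc (Max J) \<notin> J"
    using Max_ge Suc_n_not_le_n by (blast intro: Max_in)+
  then show thesis
    by (intro that[of "Max J"]) (auto simp: J_def)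
qed

lemma le_Hidx:
  assumes "real_of_int (lseq \<alpha> j) \<le> real n / 2"
  shows "j \<le> Hidx n \<alpha>"
  unfolding Hidx_def using assms by (intro Max_ge[OF finite_lseq_le]) simp

lemma seeded_memI:
  assumes "j \<le> Hidx n \<alpha>" and "I \<in> layer n K (lseq \<alpha> j)"
  shows "I \<in> seeded n \<alpha> K"
  using assms unfolding seeded_def by auto

lemma shift_pos: "1 \<le> shift K l"
  by (simp add: shift_def)

lemma shift_le:
  assumes "0 \<le> real_of_int l / K"
  shows "real_of_int (shift K l) \<le> real_of_int l / K + 1"
  using assms of_int_floor_le[of "real_of_int l / K"] unfolding shift_def by linarith

lemma layer_interval_near:
  assumes "l \<le> \<eta>" and "\<eta> \<le> int n - l"
  obtains v where "v \<le> \<eta>" and "\<eta> - v < shift K l" and "{v - l<..v + l} \<in> layer n K l"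
proof -
  define s where "s = shift K l"
  define i where "i = (\<eta> - l) div s"
  have s: "1 \<le> s"
    unfolding s_def by (rule shift_pos)
  have "0 \<le> i"
    using assms(1) s by (simp add: i_def pos_imp_zdiv_nonneg_iff)
  have "i \<le> (int n - 2 * l) div s"
    unfolding i_def using assms(2) s by (intro zdiv_mono1) auto
  then have "i \<le> \<lfloor>real_of_int (int n - 2 * l) / real_of_int s\<rfloor>"
    by (simp only: floor_divide_of_int_eq)
  with \<open>0 \<le> i\<close> have "{i * s<..i * s + 2 * l} \<in> layer n K l"
    unfolding layer_def s_def by blast
  moreover have "\<eta> - l = s * i + (\<eta> - l) mod s" "0 \<le> (\<eta> - l) mod s" "(\<eta> - l) mod s < s"
    using s by (auto simp: i_def)
  ultimately show thesis
    by (intro that[of "l + i * s"]) (auto simp: s_def algebra_simps)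
qed

lemma centred_interval_subset:
  fixes v l \<eta> :: int and r :: real
  assumes "v \<le> \<eta>" and "real_of_int (\<eta> - v) \<le> real_of_int l / 2"
    and "3 * real_of_int l / 2 - 1 < r" and "real_of_int l \<le> r"
  shows "{v - l<..v + l} \<subseteq> {x. real_of_int \<eta> - r < real_of_int x \<and> real_of_int x \<le> real_of_int \<eta> + r}"
proof -
  have "real_of_int \<eta> - r < real_of_int (v - l + 1)" and "real_of_int (v + l) \<le> real_of_int \<eta> + r"
    using assms by linarith+
  then show ?thesis
    by (force simp del: of_int_add of_int_diff)
qed

theorem lemma7:
  fixes n :: nat and \<alpha> K h :: real and \<eta> :: int
  assumes "n \<ge> 2" and "1 < \<alpha>" and "\<alpha> \<le> 2" and "K \<ge> 2"
    and "0 < h" and "h \<le> real n / 2"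
    and "max (3*h/2) 1 \<le> real_of_int \<eta>"
    and "real_of_int \<eta> \<le> real n - max (3*h/2) 1"
  shows "\<exists>l v :: int. l \<ge> 1
     \<and> {v - l<..v + l} \<in> seeded n \<alpha> K
     \<and> h/2 \<le> real_of_int l \<and> real_of_int l \<le> max h 1
     \<and> \<bar>real_of_int (v - \<eta>)\<bar> \<le> real_of_int l / K
     \<and> real_of_int l / K \<le> real_of_int l / 2
     \<and> {v - l<..v + l} \<subseteq> {x. real_of_int \<eta> - max (3*h/2) 1 < real_of_int x
                                \<and> real_of_int x \<le> real_of_int \<eta> + max (3*h/2) 1}"
proof -
  obtain j where j: "real_of_int (lseq \<alpha> j) \<le> max h 1" "max h 1 < real_of_int (lseq \<alpha> (Suc j))"
    using lseq_bracket[of "max h 1" \<alpha>] by auto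
  define l where "l = lseq \<alpha> j"
  have l: "1 \<le> l" "real_of_int l \<le> max h 1"
    using j lseq_pos[of \<alpha> j] by (auto simp: l_def)
  have lower: "h / 2 \<le> real_of_int l"
    using j(2) lseq_Suc_le_double[OF assms(3), of j] unfolding l_def by linarith
  have "j \<le> Hidx n \<alpha>"
    using j(1) assms(1,6) by (intro le_Hidx) auto
  obtain v where v: "v \<le> \<eta>" "\<eta> - v < shift K l" "{v - l<..v + l} \<in> layer n K l"
    using layer_interval_near[of l \<eta> n K] l assms(7,8) by force
  have mem: "{v - l<..v + l} \<in> seeded n \<alpha> K"
    using seeded_memI[OF \<open>j \<le> Hidx n \<alpha>\<close>] v(3) by (simp add: l_def)
  have dist: "\<bar>real_of_int (v - \<eta>)\<bar> \<le> real_of_int l / K"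
    using v(1,2) shift_le[of l K] l(1) assms(4) by force
  have half: "real_of_int l / K \<le> real_of_int l / 2"
    using l(1) assms(4) by (intro divide_left_mono) auto
  have "3 * real_of_int l / 2 - 1 < max (3*h/2) 1"
    using l by (cases "h \<ge> 1") auto
  moreover have "real_of_int (\<eta> - v) \<le> real_of_int l / 2"
    using dist half by linarith
  ultimately show ?thesis
    using centred_interval_subset[OF v(1)] l lower mem dist half by fastforce
qed

end
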